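(* Let $\mathcal Y=\min\{a_2\mathfrak g_{sr},\mathfrak g_{rd}\}$ and $\bar C_{s_2,\mathrm{MRC}}:=\tfrac12\mathbb E[\log_2(1+\rho\mathcal Y)]$. Then, with $\Xi=\frac{m_{sr}}{\Omega_{sr}a_2}+\frac{m_{rd}}{\Omega_{rd}}$, $$\bar C_{s_2,\mathrm{MRC}}=\frac{1}{2\ln2}\sum_{\mu=0}^{m_{sr}N_r-1}\sum_{\nu=0}^{m_{rd}N_d-1}\frac{m_{sr}^{\mu}m_{rd}^{\nu}}{\Omega_{sr}^{\mu}\Omega_{rd}^{\nu}a_2^{\mu}\,\mu!\,\nu!}\,\frac{\Gamma(\mu+\nu+1)}{\rho^{\mu+\nu}}\,e^{\Xi/\rho}\,\Gamma\Big[-\mu-\nu,\tfrac{\Xi}{\rho}\Big].$$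
   Context: Let $N_r,N_d$ be positive integers, $m_{sr},m_{sd},m_{rd}$ positive integers, and $\Omega_{sr},\Omega_{sd},\Omega_{rd}>0$. Let $\{G_{sr,i}\}_{i=1}^{N_r}$, $\{G_{sd,j}\}_{j=1}^{N_d}$, $\{G_{rd,k}\}_{k=1}^{N_d}$ be mutually independent random variables, where each $G_{sr,i}$ has the Gamma density $f(x)=\frac{(m_{sr}/\Omega_{sr})^{m_{sr}}x^{m_{sr}-1}}{\Gamma(m_{sr})}e^{-m_{sr}x/\Omega_{sr}}$, $x>0$, and analogously $G_{sd,j}$ with parameters $(m_{sd},\Omega_{sd})$ and $G_{rd,k}$ with $(m_{rd},\Omega_{rd})$. MRC gains: $\mathfrak g_{sr}=\sum_{i=1}^{N_r}G_{sr,i}$, $\mathfrak g_{sd}=\sum_{j=1}^{N_d}G_{sd,j}$, $\mathfrak g_{rd}=\sum_{k=1}^{N_d}G_{rd,k}$. Let $\rho>0$ and $a_2\in(0,1/2)$. $\Gamma[s,z]=\int_z^\infty t^{s-1}e^{-t}\,dt$ ($z>0$) is the upper incomplete Gamma function. *)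

theory Defs
  imports "HOL-Probability.Probability"
begin

text \<open>Gamma (Nakagami-m power) density with shape m and mean Omega, as in the paper;
  zero for x \<le> 0.\<close>
definition gamma_pdf :: "nat \<Rightarrow> real \<Rightarrow> real \<Rightarrow> real" where
  "gamma_pdf m \<Omega> x =
     (if x > 0 then (real m / \<Omega>) ^ m * x ^ (m - 1) / Gamma (real m) * exp (- real m * x / \<Omega>)
      else 0)"

definition upper_inc_Gamma :: "real \<Rightarrow> real \<Rightarrow> real" where
  "upper_inc_Gamma s z = (LBINT t:{z..}. t powr (s - 1) * exp (- t))"

end

theory Submission
  imports Defs
begin

text \<open>Sums of independent Gamma variables with integer shape are Erlang, so the two MRC gains are
  independent Erlang variables and the tail of \<open>Y = min (a\<^sub>2 g\<^sub>s\<^sub>r) g\<^sub>r\<^sub>d\<close> is a product of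
  two Erlang tails, i.e. a finite sum of terms \<open>c t\<^sup>\<mu>\<^sup>+\<^sup>\<nu> e\<^sup>-\<^sup>\<Xi>\<^sup>t\<close>.
  The layer-cake formula gives \<open>E[ln (1 + \<rho> Y)] = \<integral>\<^sub>0\<^sup>\<infinity> \<rho> / (1 + \<rho> t) P(Y > t) dt\<close>, and each
  \<open>\<integral>\<^sub>0\<^sup>\<infinity> \<rho> t\<^sup>n e\<^sup>-\<^sup>\<Xi>\<^sup>t / (1 + \<rho> t) dt\<close> equals \<open>n! \<rho>\<^sup>-\<^sup>n e\<^sup>\<Xi>\<^sup>/\<^sup>\<rho> \<Gamma>[-n, \<Xi>/\<rho>]\<close>.\<close>

lemma nn_integral_power_exp:
  assumes l: "0 < l"
  shows "(\<integral>\<^sup>+x. ennreal (x ^ n * exp (- l * x)) * indicator {0..} x \<partial>lborel) = ennreal (fact n / l ^ (n + 1))"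
proof -
  have "(\<integral>\<^sup>+x. ennreal (x ^ n * exp (- l * x)) * indicator {0..} x \<partial>lborel)
      = (\<integral>\<^sup>+x. ennreal (1 / l) * ennreal (erlang_density 0 l x * x ^ n) \<partial>lborel)"
    using l by (intro nn_integral_cong) (auto simp: erlang_density_def ennreal_mult'[symmetric] split: split_indicator)
  also have "\<dots> = ennreal (1 / l) * ennreal (fact n / l ^ n)"
    using nn_integral_erlang_ith_moment[OF l, of 0 n] by (subst nn_integral_cmult) auto
  also have "\<dots> = ennreal (fact n / l ^ (n + 1))"
    using l by (simp add: ennreal_mult'[symmetric] field_simps)
  finally show ?thesis .
qed

lemma upper_inc_Gamma_nonneg: "0 \<le> upper_inc_Gamma s z"
  unfolding upper_inc_Gamma_def set_lebesgue_integral_def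
  by (intro integral_nonneg_AE) (auto simp: indicator_def)

lemma nn_integral_upper_inc_Gamma:
  assumes z: "0 < z"
  shows "(\<integral>\<^sup>+s. ennreal (indicator {z..} s * (s powr (- real n - 1) * exp (- s))) \<partial>lborel)
     = ennreal (upper_inc_Gamma (- real n) z)"
proof -
  let ?f = "\<lambda>s::real. indicator {z..} s * (s powr (- real n - 1) * exp (- s))"
  have "(\<integral>\<^sup>+s. ennreal (?f s) \<partial>lborel)
      \<le> (\<integral>\<^sup>+s. ennreal (z powr (- real n - 1)) * (ennreal (exp (- s)) * indicator {0..} s) \<partial>lborel)"
  proof (intro nn_integral_mono)
    fix s :: real
    show "ennreal (?f s) \<le> ennreal (z powr (- real n - 1)) * (ennreal (exp (- s)) * indicator {0..} s)"
    proof (cases "z \<le> s")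
      case True
      then have "s powr (- real n - 1) \<le> z powr (- real n - 1)"
        using z by (intro powr_mono2') auto
      then show ?thesis
        using True z by (simp add: ennreal_mult'[symmetric] indicator_def mult_right_mono)
    qed (simp add: indicator_def)
  qed
  also have "\<dots> < \<infinity>"
    using nn_integral_power_exp[of 1 0] by (subst nn_integral_cmult) (simp_all add: ennreal_mult'[symmetric])
  finally have "integrable lborel ?f"
    by (intro integrableI_nonneg) (auto simp: indicator_def)
  then have "(\<integral>\<^sup>+s. ennreal (?f s) \<partial>lborel) = ennreal (integral\<^sup>L lborel ?f)"
    by (intro nn_integral_eq_integral) (auto simp: indicator_def)
  also have "integral\<^sup>L lborel ?f = upper_inc_Gamma (- real n) z"
    unfolding upper_inc_Gamma_def set_lebesgue_integral_def by (simp add: algebra_simps)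
  finally show ?thesis .
qed

lemma nn_integral_exp_eq_divide_affine:
  assumes "0 \<le> t" "0 < \<rho>"
  shows "(\<integral>\<^sup>+w. ennreal (exp (- (t + 1 / \<rho>) * w)) * indicator {0..} w \<partial>lborel) = ennreal (\<rho> / (1 + \<rho> * t))"
proof -
  have "0 < t + 1 / \<rho>" using assms by (simp add: add_nonneg_pos)
  from nn_integral_power_exp[OF this, of 0]
  have "(\<integral>\<^sup>+w. ennreal (exp (- (t + 1 / \<rho>) * w)) * indicator {0..} w \<partial>lborel) = ennreal (1 / (t + 1 / \<rho>))"
    by simp
  also have "1 / (t + 1 / \<rho>) = \<rho> / (1 + \<rho> * t)"
    using assms by (simp add: field_simps)
  finally show ?thesis .
qed

lemma powr_neg_of_nat_minus_one:
  assumes "0 < s"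
  shows "s powr (- real n - 1) = 1 / s ^ (n + 1)"
proof -
  have "s powr (- real n - 1) = s powr (- real (n + 1))"
    by (rule arg_cong[where f="(powr) s"]) simp
  also have "\<dots> = 1 / s ^ (n + 1)"
    unfolding powr_minus powr_realpow[OF assms] by (simp add: divide_inverse)
  finally show ?thesis .
qed

text \<open>The substitution \<open>w = \<rho> s - \<Xi>\<close> turns \<open>\<integral>\<^sub>0\<^sup>\<infinity> e\<^sup>-\<^sup>w\<^sup>/\<^sup>\<rho> n! / (\<Xi> + w)\<^sup>n\<^sup>+\<^sup>1 dw\<close> into an incomplete Gamma integral.\<close>
lemma affine_subst_upper_inc_Gamma_integrand:
  assumes "0 < \<Xi>" "0 < \<rho>"
  shows "\<bar>\<rho>\<bar> * (indicator {0..} (- \<Xi> + \<rho> * s) * (exp (- (- \<Xi> + \<rho> * s) / \<rho>) * fact n / (\<Xi> + (- \<Xi> + \<rho> * s)) ^ (n + 1)))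
    = fact n / \<rho> ^ n * exp (\<Xi> / \<rho>) * (indicator {\<Xi> / \<rho>..} s * (s powr (- real n - 1) * exp (- s)))"
proof (cases "\<Xi> / \<rho> \<le> s")
  case True
  then have "0 < s" using assms by (smt (verit) divide_pos_pos)
  moreover have "exp (- (- \<Xi> + \<rho> * s) / \<rho>) = exp (\<Xi> / \<rho>) * exp (- s)"
    using assms by (simp add: exp_add[symmetric] field_simps)
  ultimately show ?thesis
    using True assms by (simp add: powr_neg_of_nat_minus_one field_simps power_mult_distrib)
qed (use assms in \<open>simp add: field_simps\<close>)

text \<open>Writing \<open>\<rho> / (1 + \<rho> t)\<close> as a Laplace integral and swapping the order of integration,
  the inner integral is an Erlang moment \<open>n! / (\<Xi> + w)\<^sup>n\<^sup>+\<^sup>1\<close>.\<close>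
lemma nn_integral_power_exp_div_affine:
  assumes \<Xi>: "0 < \<Xi>" and \<rho>: "0 < \<rho>"
  shows "(\<integral>\<^sup>+t. ennreal (indicator {0..} t * (\<rho> * t ^ n * exp (- \<Xi> * t) / (1 + \<rho> * t))) \<partial>lborel)
     = ennreal (fact n / \<rho> ^ n * exp (\<Xi> / \<rho>) * upper_inc_Gamma (- real n) (\<Xi> / \<rho>))"
proof -
  let ?g = "\<lambda>t w::real. ennreal (indicator {0..} t * indicator {0..} w * (t ^ n * exp (- \<Xi> * t) * exp (- (t + 1 / \<rho>) * w)))"
  have "(\<integral>\<^sup>+t. ennreal (indicator {0..} t * (\<rho> * t ^ n * exp (- \<Xi> * t) / (1 + \<rho> * t))) \<partial>lborel)
     = (\<integral>\<^sup>+t. \<integral>\<^sup>+w. ?g t w \<partial>lborel \<partial>lborel)"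
  proof (intro nn_integral_cong)
    fix t :: real
    show "ennreal (indicator {0..} t * (\<rho> * t ^ n * exp (- \<Xi> * t) / (1 + \<rho> * t))) = (\<integral>\<^sup>+w. ?g t w \<partial>lborel)"
    proof (cases "0 \<le> t")
      case True
      have "(\<integral>\<^sup>+w. ?g t w \<partial>lborel)
          = (\<integral>\<^sup>+w. ennreal (t ^ n * exp (- \<Xi> * t)) * (ennreal (exp (- (t + 1 / \<rho>) * w)) * indicator {0..} w) \<partial>lborel)"
        using True by (intro nn_integral_cong) (auto simp: ennreal_mult'[symmetric] indicator_def)
      also have "\<dots> = ennreal (t ^ n * exp (- \<Xi> * t)) * ennreal (\<rho> / (1 + \<rho> * t))"
        using nn_integral_exp_eq_divide_affine[OF True \<rho>] by (subst nn_integral_cmult) simp_all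
      finally show ?thesis
        using True \<rho> by (simp add: ennreal_mult'[symmetric] add_pos_nonneg)
    qed (simp add: indicator_def)
  qed
  also have "\<dots> = (\<integral>\<^sup>+w. \<integral>\<^sup>+t. ?g t w \<partial>lborel \<partial>lborel)"
    by (subst lborel_pair.Fubini') (auto simp: case_prod_unfold)
  also have "\<dots> = (\<integral>\<^sup>+w. ennreal (indicator {0..} w * (exp (- w / \<rho>) * fact n / (\<Xi> + w) ^ (n + 1))) \<partial>lborel)"
  proof (intro nn_integral_cong)
    fix w :: real
    show "(\<integral>\<^sup>+t. ?g t w \<partial>lborel) = ennreal (indicator {0..} w * (exp (- w / \<rho>) * fact n / (\<Xi> + w) ^ (n + 1)))"
    proof (cases "0 \<le> w")
      case True
      then have l: "0 < \<Xi> + w" using \<Xi> by simp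
      have "(\<integral>\<^sup>+t. ?g t w \<partial>lborel)
          = (\<integral>\<^sup>+t. ennreal (exp (- w / \<rho>)) * (ennreal (t ^ n * exp (- (\<Xi> + w) * t)) * indicator {0..} t) \<partial>lborel)"
        using True by (intro nn_integral_cong)
          (auto simp: ennreal_mult'[symmetric] indicator_def exp_add[symmetric] algebra_simps)
      also have "\<dots> = ennreal (exp (- w / \<rho>)) * ennreal (fact n / (\<Xi> + w) ^ (n + 1))"
        using nn_integral_power_exp[OF l, of n] by (subst nn_integral_cmult) simp_all
      finally show ?thesis
        using True l by (simp add: ennreal_mult'[symmetric])
    qed (simp add: indicator_def)
  qed
  also have "\<dots> = ennreal \<bar>\<rho>\<bar> * (\<integral>\<^sup>+s. ennreal (indicator {0..} (- \<Xi> + \<rho> * s)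
      * (exp (- (- \<Xi> + \<rho> * s) / \<rho>) * fact n / (\<Xi> + (- \<Xi> + \<rho> * s)) ^ (n + 1))) \<partial>lborel)"
    by (rule nn_integral_real_affine) (use \<rho> in auto)
  also have "\<dots> = (\<integral>\<^sup>+s. ennreal (fact n / \<rho> ^ n * exp (\<Xi> / \<rho>))
      * ennreal (indicator {\<Xi> / \<rho>..} s * (s powr (- real n - 1) * exp (- s))) \<partial>lborel)"
    by (subst nn_integral_cmult[symmetric], measurable)
      (simp only: ennreal_mult'[OF abs_ge_zero, symmetric] affine_subst_upper_inc_Gamma_integrand[OF \<Xi> \<rho>],
       intro nn_integral_cong ennreal_mult', use \<rho> in simp)
  also have "\<dots> = ennreal (fact n / \<rho> ^ n * exp (\<Xi> / \<rho>)) * ennreal (upper_inc_Gamma (- real n) (\<Xi> / \<rho>))"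
    using \<Xi> \<rho> by (subst nn_integral_cmult) (simp_all add: nn_integral_upper_inc_Gamma)
  also have "\<dots> = ennreal (fact n / \<rho> ^ n * exp (\<Xi> / \<rho>) * upper_inc_Gamma (- real n) (\<Xi> / \<rho>))"
    using \<rho> by (subst ennreal_mult') auto
  finally show ?thesis .
qed

lemma (in sigma_finite_measure) nn_integral_layer_cake:
  fixes F f :: "real \<Rightarrow> real"
  assumes [measurable]: "Y \<in> borel_measurable M" "f \<in> borel_measurable borel"
    and Y_nonneg: "AE \<omega> in M. 0 \<le> Y \<omega>"
    and F_deriv: "\<And>x. 0 \<le> x \<Longrightarrow> (F has_real_derivative f x) (at x)"
    and f_nonneg: "\<And>x. 0 \<le> x \<Longrightarrow> 0 \<le> f x" and "F 0 = 0"
  shows "(\<integral>\<^sup>+\<omega>. ennreal (F (Y \<omega>)) \<partial>M)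
       = (\<integral>\<^sup>+t. ennreal (f t * indicator {0..} t) * emeasure M {\<omega> \<in> space M. t < Y \<omega>} \<partial>lborel)"
proof -
  interpret pair_sigma_finite M lborel
    by (intro pair_sigma_finite.intro sigma_finite_measure_axioms lborel.sigma_finite_measure_axioms)
  let ?h = "\<lambda>\<omega> t. ennreal (f t * indicator {0..} t) * (if t < Y \<omega> then 1 else 0)"
  have "(\<integral>\<^sup>+\<omega>. ennreal (F (Y \<omega>)) \<partial>M) = (\<integral>\<^sup>+\<omega>. \<integral>\<^sup>+t. ?h \<omega> t \<partial>lborel \<partial>M)"
  proof (rule nn_integral_cong_AE, rule eventually_mono[OF Y_nonneg])
    fix \<omega> assume Y: "0 \<le> Y \<omega>"
    have "(\<integral>\<^sup>+t. ?h \<omega> t \<partial>lborel) = (\<integral>\<^sup>+t. ennreal (f t) * indicator {0..Y \<omega>} t \<partial>lborel)"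
      by (intro nn_integral_cong_AE eventually_mono[OF AE_lborel_singleton[of "Y \<omega>"]])
        (auto simp: indicator_def)
    also have "\<dots> = ennreal (F (Y \<omega>) - F 0)"
      using Y F_deriv f_nonneg by (intro nn_integral_FTC_Icc) auto
    finally show "ennreal (F (Y \<omega>)) = (\<integral>\<^sup>+t. ?h \<omega> t \<partial>lborel)"
      using \<open>F 0 = 0\<close> by simp
  qed
  also have "\<dots> = (\<integral>\<^sup>+t. \<integral>\<^sup>+\<omega>. ?h \<omega> t \<partial>M \<partial>lborel)"
    by (rule Fubini'[symmetric]) measurable
  also have "\<dots> = (\<integral>\<^sup>+t. ennreal (f t * indicator {0..} t) * emeasure M {\<omega> \<in> space M. t < Y \<omega>} \<partial>lborel)"
  proof (rule nn_integral_cong)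
    fix t :: real
    have "(\<integral>\<^sup>+\<omega>. ?h \<omega> t \<partial>M) = (\<integral>\<^sup>+\<omega>. ennreal (f t * indicator {0..} t) * indicator {\<omega> \<in> space M. t < Y \<omega>} \<omega> \<partial>M)"
      by (intro nn_integral_cong) (auto simp: indicator_def)
    also have "\<dots> = ennreal (f t * indicator {0..} t) * emeasure M {\<omega> \<in> space M. t < Y \<omega>}"
      by (rule nn_integral_cmult_indicator) measurable
    finally show "(\<integral>\<^sup>+\<omega>. ?h \<omega> t \<partial>M) = \<dots>" .
  qed
  finally show ?thesis .
qed

lemma (in prob_space) expectation_ln_one_plus_of_tail:
  fixes c :: "'i \<Rightarrow> real" and n :: "'i \<Rightarrow> nat"
  assumes [measurable]: "Y \<in> borel_measurable M"
    and Y_nonneg: "AE \<omega> in M. 0 \<le> Y \<omega>"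
    and \<rho>: "0 < \<rho>" and \<Xi>: "0 < \<Xi>" and "finite K" and c_nonneg: "\<And>k. k \<in> K \<Longrightarrow> 0 \<le> c k"
    and tail: "\<And>t. 0 \<le> t \<Longrightarrow> prob {\<omega> \<in> space M. t < Y \<omega>} = (\<Sum>k\<in>K. c k * (t ^ n k * exp (- \<Xi> * t)))"
  shows "(\<integral>\<omega>. ln (1 + \<rho> * Y \<omega>) \<partial>M)
       = (\<Sum>k\<in>K. c k * (fact (n k) / \<rho> ^ n k * exp (\<Xi> / \<rho>) * upper_inc_Gamma (- real (n k)) (\<Xi> / \<rho>)))"
    (is "_ = ?S")
proof -
  let ?I = "\<lambda>k t. indicator {0..} t * (\<rho> * t ^ n k * exp (- \<Xi> * t) / (1 + \<rho> * t))"
  let ?G = "\<lambda>k. fact (n k) / \<rho> ^ n k * exp (\<Xi> / \<rho>) * upper_inc_Gamma (- real (n k)) (\<Xi> / \<rho>)"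
  have I_nonneg: "0 \<le> ?I k t" for k t
    using \<rho> by (auto simp: indicator_def add_pos_nonneg less_imp_le)
  have G_nonneg: "0 \<le> ?G k" for k
    using \<rho> upper_inc_Gamma_nonneg by simp
  have "(\<integral>\<^sup>+\<omega>. ennreal (ln (1 + \<rho> * Y \<omega>)) \<partial>M)
      = (\<integral>\<^sup>+t. ennreal (\<rho> / (1 + \<rho> * t) * indicator {0..} t) * emeasure M {\<omega> \<in> space M. t < Y \<omega>} \<partial>lborel)"
  proof (rule nn_integral_layer_cake[OF _ _ Y_nonneg])
    fix x :: real assume "0 \<le> x"
    then have "0 < 1 + \<rho> * x" using \<rho> by (simp add: add_pos_nonneg)
    then show "((\<lambda>x. ln (1 + \<rho> * x)) has_real_derivative \<rho> / (1 + \<rho> * x)) (at x)"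
      by (auto intro!: derivative_eq_intros)
    show "0 \<le> \<rho> / (1 + \<rho> * x)" using \<open>0 \<le> x\<close> \<rho> by simp
  qed simp_all
  also have "\<dots> = (\<integral>\<^sup>+t. (\<Sum>k\<in>K. ennreal (c k) * ennreal (?I k t)) \<partial>lborel)"
  proof (rule nn_integral_cong)
    fix t :: real
    have "0 \<le> \<rho> / (1 + \<rho> * t) * indicator {0..} t"
      using \<rho> by (auto simp: indicator_def add_pos_nonneg less_imp_le)
    then have "ennreal (\<rho> / (1 + \<rho> * t) * indicator {0..} t) * emeasure M {\<omega> \<in> space M. t < Y \<omega>}
        = ennreal (\<rho> / (1 + \<rho> * t) * indicator {0..} t * prob {\<omega> \<in> space M. t < Y \<omega>})"
      unfolding emeasure_eq_measure by (rule ennreal_mult'[symmetric])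
    also have "\<rho> / (1 + \<rho> * t) * indicator {0..} t * prob {\<omega> \<in> space M. t < Y \<omega>} = (\<Sum>k\<in>K. c k * ?I k t)"
    proof (cases "0 \<le> t")
      case True
      then show ?thesis
        unfolding tail[OF True] by (simp add: sum_distrib_left sum_divide_distrib ac_simps)
    qed simp
    also have "ennreal (\<Sum>k\<in>K. c k * ?I k t) = (\<Sum>k\<in>K. ennreal (c k * ?I k t))"
      by (intro sum_ennreal[symmetric] mult_nonneg_nonneg c_nonneg I_nonneg)
    also have "\<dots> = (\<Sum>k\<in>K. ennreal (c k) * ennreal (?I k t))"
      by (intro sum.cong refl ennreal_mult' c_nonneg)
    finally show "ennreal (\<rho> / (1 + \<rho> * t) * indicator {0..} t) * emeasure M {\<omega> \<in> space M. t < Y \<omega>}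
        = (\<Sum>k\<in>K. ennreal (c k) * ennreal (?I k t))" .
  qed
  also have "\<dots> = (\<Sum>k\<in>K. ennreal (c k) * (\<integral>\<^sup>+t. ennreal (?I k t) \<partial>lborel))"
    by (subst nn_integral_sum, measurable) (intro sum.cong refl nn_integral_cmult, measurable)
  also have "\<dots> = (\<Sum>k\<in>K. ennreal (c k) * ennreal (?G k))"
    by (simp only: nn_integral_power_exp_div_affine[OF \<Xi> \<rho>])
  also have "\<dots> = (\<Sum>k\<in>K. ennreal (c k * ?G k))"
    by (intro sum.cong refl ennreal_mult'[symmetric] c_nonneg)
  also have "\<dots> = ennreal ?S"
    by (intro sum_ennreal mult_nonneg_nonneg c_nonneg G_nonneg)
  finally have nn: "(\<integral>\<^sup>+\<omega>. ennreal (ln (1 + \<rho> * Y \<omega>)) \<partial>M) = ennreal ?S" .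
  have "AE \<omega> in M. 0 \<le> ln (1 + \<rho> * Y \<omega>)"
    using Y_nonneg by eventually_elim (use \<rho> in simp)
  moreover have "0 \<le> ?S"
    by (intro sum_nonneg mult_nonneg_nonneg c_nonneg G_nonneg)
  ultimately have "has_bochner_integral M (\<lambda>\<omega>. ln (1 + \<rho> * Y \<omega>)) ?S"
    using nn by (intro has_bochner_integral_nn_integral) simp_all
  then show ?thesis
    by (rule has_bochner_integral_integral_eq)
qed

lemma distributed_gamma_pdf_erlang:
  assumes "0 < m" "0 < \<Omega>"
    and "distributed M lborel X (\<lambda>x. ennreal (gamma_pdf m \<Omega> x))"
  shows "distributed M lborel X (\<lambda>x. ennreal (erlang_density (m - 1) (real m / \<Omega>) x))"
proof -
  have "Gamma (real m) = fact (m - 1)"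
    using Gamma_fact[of "m - 1", where 'a=real] \<open>0 < m\<close> by (simp add: of_nat_diff)
  then have "gamma_pdf m \<Omega> x = erlang_density (m - 1) (real m / \<Omega>) x" if "x \<noteq> 0" for x
    using that \<open>0 < m\<close> by (auto simp: gamma_pdf_def erlang_density_def field_simps Suc_diff_1)
  then have "AE x in lborel. ennreal (gamma_pdf m \<Omega> x) = ennreal (erlang_density (m - 1) (real m / \<Omega>) x)"
    by (intro eventually_mono[OF AE_lborel_singleton[of 0]]) simp
  then show ?thesis
    using assms(3) by (subst distributed_cong_density[symmetric]) (auto simp: gamma_pdf_def)
qed

lemma (in prob_space) gamma_sum_distributed:
  assumes "finite I" "I \<noteq> {}" "0 < m" "0 < \<Omega>"
    and "indep_vars (\<lambda>_. borel) X I"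
    and "\<And>i. i \<in> I \<Longrightarrow> distributed M lborel (X i) (\<lambda>x. ennreal (gamma_pdf m \<Omega> x))"
  shows "distributed M lborel (\<lambda>\<omega>. \<Sum>i\<in>I. X i \<omega>) (\<lambda>x. ennreal (erlang_density (m * card I - 1) (real m / \<Omega>) x))"
proof -
  have "distributed M lborel (\<lambda>\<omega>. \<Sum>i\<in>I. X i \<omega>) (erlang_density ((\<Sum>i\<in>I. Suc (m - 1)) - 1) (real m / \<Omega>))"
    using assms by (intro erlang_distributed_sum distributed_gamma_pdf_erlang) auto
  moreover have "(\<Sum>i\<in>I. Suc (m - 1)) = m * card I"
    using \<open>0 < m\<close> by simp
  ultimately show ?thesis by simp
qed

lemma (in prob_space) erlang_distributed_gt_sum:
  assumes "distributed M lborel X (\<lambda>x. ennreal (erlang_density (K - 1) l x))"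
    and "0 < l" "0 \<le> a" "0 < K"
  shows "prob {\<omega> \<in> space M. a < X \<omega>} = (\<Sum>n<K. (l * a) ^ n * exp (- l * a) / fact n)"
proof -
  have "{..K - 1} = {..<K}" using \<open>0 < K\<close> by auto
  then show ?thesis
    using erlang_distributed_gt[OF assms(1-3)] \<open>0 \<le> a\<close> by (simp add: erlang_CDF_def)
qed

lemma (in prob_space) indep_var_sum_sum:
  fixes X :: "'i \<Rightarrow> 'a \<Rightarrow> real"
  assumes "indep_vars (\<lambda>_. borel) X I" "A \<subseteq> I" "B \<subseteq> I" "A \<inter> B = {}"
  shows "indep_var borel (\<lambda>\<omega>. \<Sum>i\<in>A. X i \<omega>) borel (\<lambda>\<omega>. \<Sum>i\<in>B. X i \<omega>)"
proof -
  have "(\<lambda>f. \<Sum>i\<in>J. f i) \<in> borel_measurable (PiM J (\<lambda>_. borel :: real measure))" for J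
    by measurable
  with indep_var_restrict[OF assms(1) assms(4,2,3)]
  have "indep_var borel ((\<lambda>f. \<Sum>i\<in>A. f i) \<circ> (\<lambda>\<omega>. restrict (\<lambda>i. X i \<omega>) A))
      borel ((\<lambda>f. \<Sum>i\<in>B. f i) \<circ> (\<lambda>\<omega>. restrict (\<lambda>i. X i \<omega>) B))"
    by (intro indep_var_compose)
  then show ?thesis
    by (simp add: comp_def)
qed

lemma (in prob_space) prob_min_erlang_gt:
  assumes X: "distributed M lborel X (\<lambda>x. ennreal (erlang_density (K - 1) l1 x))"
    and Z: "distributed M lborel Z (\<lambda>x. ennreal (erlang_density (L - 1) l2 x))"
    and indep: "indep_var borel X borel Z"
    and "0 < a" "0 < l1" "0 < l2" "0 < K" "0 < L" "0 \<le> t"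
  shows "prob {\<omega> \<in> space M. t < min (a * X \<omega>) (Z \<omega>)}
       = (\<Sum>\<mu><K. \<Sum>\<nu><L. (l1 / a) ^ \<mu> * l2 ^ \<nu> / (fact \<mu> * fact \<nu>) * (t ^ (\<mu> + \<nu>) * exp (- (l1 / a + l2) * t)))"
proof -
  have "{\<omega> \<in> space M. t < min (a * X \<omega>) (Z \<omega>)} = (\<lambda>\<omega>. (X \<omega>, Z \<omega>)) -` ({t / a<..} \<times> {t<..}) \<inter> space M"
    using \<open>0 < a\<close> by (auto simp: field_simps)
  then have "prob {\<omega> \<in> space M. t < min (a * X \<omega>) (Z \<omega>)} = prob {\<omega> \<in> space M. t / a < X \<omega>} * prob {\<omega> \<in> space M. t < Z \<omega>}"
    using indep_varD[OF indep, of "{t / a<..}" "{t<..}"] by (simp add: vimage_def Int_def conj_commute)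
  also have "\<dots> = (\<Sum>\<mu><K. (l1 * (t / a)) ^ \<mu> * exp (- l1 * (t / a)) / fact \<mu>) * (\<Sum>\<nu><L. (l2 * t) ^ \<nu> * exp (- l2 * t) / fact \<nu>)"
    using assms by (simp add: erlang_distributed_gt_sum)
  also have "\<dots> = (\<Sum>\<mu><K. \<Sum>\<nu><L. (l1 / a) ^ \<mu> * l2 ^ \<nu> / (fact \<mu> * fact \<nu>) * (t ^ (\<mu> + \<nu>) * exp (- (l1 / a + l2) * t)))"
    unfolding sum_product
  proof (intro sum.cong refl)
    fix \<mu> \<nu>
    have "exp (- l1 * (t / a)) * exp (- l2 * t) = exp (- (l1 / a + l2) * t)"
      unfolding exp_add[symmetric] by (simp add: field_simps)
    then show "(l1 * (t / a)) ^ \<mu> * exp (- l1 * (t / a)) / fact \<mu> * ((l2 * t) ^ \<nu> * exp (- l2 * t) / fact \<nu>)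
        = (l1 / a) ^ \<mu> * l2 ^ \<nu> / (fact \<mu> * fact \<nu>) * (t ^ (\<mu> + \<nu>) * exp (- (l1 / a + l2) * t))"
      by (simp add: power_mult_distrib power_divide power_add field_simps)
  qed
  finally show ?thesis .
qed

lemma (in prob_space) erlang_distributed_AE_nonneg:
  assumes "distributed M lborel X (\<lambda>x. ennreal (erlang_density k l x))"
  shows "AE \<omega> in M. 0 \<le> X \<omega>"
  by (subst distributed_AE2[OF assms]) (auto simp: erlang_density_def)

lemma (in prob_space) expectation_ln_one_plus_min_erlang:
  assumes X: "distributed M lborel X (\<lambda>x. ennreal (erlang_density (K - 1) l1 x))"
    and Z: "distributed M lborel Z (\<lambda>x. ennreal (erlang_density (L - 1) l2 x))"
    and "indep_var borel X borel Z"
    and "0 < a" "0 < l1" "0 < l2" "0 < K" "0 < L" "0 < \<rho>"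
  shows "(\<integral>\<omega>. ln (1 + \<rho> * min (a * X \<omega>) (Z \<omega>)) \<partial>M)
       = (\<Sum>\<mu><K. \<Sum>\<nu><L. (l1 / a) ^ \<mu> * l2 ^ \<nu> / (fact \<mu> * fact \<nu>)
           * (fact (\<mu> + \<nu>) / \<rho> ^ (\<mu> + \<nu>) * exp ((l1 / a + l2) / \<rho>)
              * upper_inc_Gamma (- real (\<mu> + \<nu>)) ((l1 / a + l2) / \<rho>)))"
proof -
  have [measurable]: "X \<in> borel_measurable M" "Z \<in> borel_measurable M"
    using distributed_measurable[OF X] distributed_measurable[OF Z] by simp_all
  define c where "c = (\<lambda>(\<mu>, \<nu>). (l1 / a) ^ \<mu> * l2 ^ \<nu> / (fact \<mu> * fact \<nu> :: real))"
  define n where "n = (\<lambda>(\<mu>, \<nu>). \<mu> + \<nu> :: nat)"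
  have "(\<lambda>\<omega>. min (a * X \<omega>) (Z \<omega>)) \<in> borel_measurable M"
    by measurable
  moreover have "AE \<omega> in M. 0 \<le> min (a * X \<omega>) (Z \<omega>)"
    using erlang_distributed_AE_nonneg[OF X] erlang_distributed_AE_nonneg[OF Z]
    by eventually_elim (use \<open>0 < a\<close> in simp)
  moreover have "0 < l1 / a + l2"
    using assms by (simp add: add_pos_pos)
  moreover have "prob {\<omega> \<in> space M. t < min (a * X \<omega>) (Z \<omega>)}
      = (\<Sum>k\<in>{..<K} \<times> {..<L}. c k * (t ^ n k * exp (- (l1 / a + l2) * t)))" if "0 \<le> t" for t
    unfolding prob_min_erlang_gt[OF assms(1-8) that] sum.cartesian_product
    by (intro sum.cong) (auto simp: c_def n_def)
  ultimately have "(\<integral>\<omega>. ln (1 + \<rho> * min (a * X \<omega>) (Z \<omega>)) \<partial>M)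
      = (\<Sum>k\<in>{..<K} \<times> {..<L}. c k * (fact (n k) / \<rho> ^ n k * exp ((l1 / a + l2) / \<rho>)
          * upper_inc_Gamma (- real (n k)) ((l1 / a + l2) / \<rho>)))"
    using assms by (intro expectation_ln_one_plus_of_tail) (auto simp: c_def)
  then show ?thesis
    unfolding sum.cartesian_product by (simp add: c_def n_def case_prod_beta)
qed

lemma (in prob_space) expectation_ln_one_plus_min_gamma_sums:
  assumes indep: "indep_vars (\<lambda>_. borel) X I"
    and "A \<subseteq> I" "B \<subseteq> I" "A \<inter> B = {}" "finite A" "finite B" "A \<noteq> {}" "B \<noteq> {}"
    and "0 < m1" "0 < \<Omega>1" "0 < m2" "0 < \<Omega>2" "0 < a" "0 < \<rho>"
    and "\<And>i. i \<in> A \<Longrightarrow> distributed M lborel (X i) (\<lambda>x. ennreal (gamma_pdf m1 \<Omega>1 x))"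
    and "\<And>i. i \<in> B \<Longrightarrow> distributed M lborel (X i) (\<lambda>x. ennreal (gamma_pdf m2 \<Omega>2 x))"
  shows "(\<integral>\<omega>. ln (1 + \<rho> * min (a * (\<Sum>i\<in>A. X i \<omega>)) (\<Sum>i\<in>B. X i \<omega>)) \<partial>M)
       = (\<Sum>\<mu><m1 * card A. \<Sum>\<nu><m2 * card B.
            real m1 ^ \<mu> * real m2 ^ \<nu> / (\<Omega>1 ^ \<mu> * \<Omega>2 ^ \<nu> * a ^ \<mu> * fact \<mu> * fact \<nu>)
            * (Gamma (real (\<mu> + \<nu> + 1)) / \<rho> ^ (\<mu> + \<nu>))
            * exp ((real m1 / (\<Omega>1 * a) + real m2 / \<Omega>2) / \<rho>)
            * upper_inc_Gamma (- real (\<mu> + \<nu>)) ((real m1 / (\<Omega>1 * a) + real m2 / \<Omega>2) / \<rho>))"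
proof -
  have "distributed M lborel (\<lambda>\<omega>. \<Sum>i\<in>A. X i \<omega>)
      (\<lambda>x. ennreal (erlang_density (m1 * card A - 1) (real m1 / \<Omega>1) x))"
    by (rule gamma_sum_distributed) (use assms in \<open>auto intro: indep_vars_subset[OF indep]\<close>)
  moreover have "distributed M lborel (\<lambda>\<omega>. \<Sum>i\<in>B. X i \<omega>)
      (\<lambda>x. ennreal (erlang_density (m2 * card B - 1) (real m2 / \<Omega>2) x))"
    by (rule gamma_sum_distributed) (use assms in \<open>auto intro: indep_vars_subset[OF indep]\<close>)
  moreover have "indep_var borel (\<lambda>\<omega>. \<Sum>i\<in>A. X i \<omega>) borel (\<lambda>\<omega>. \<Sum>i\<in>B. X i \<omega>)"
    using assms by (intro indep_var_sum_sum[OF indep])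
  ultimately have "(\<integral>\<omega>. ln (1 + \<rho> * min (a * (\<Sum>i\<in>A. X i \<omega>)) (\<Sum>i\<in>B. X i \<omega>)) \<partial>M)
      = (\<Sum>\<mu><m1 * card A. \<Sum>\<nu><m2 * card B.
          (real m1 / \<Omega>1 / a) ^ \<mu> * (real m2 / \<Omega>2) ^ \<nu> / (fact \<mu> * fact \<nu>)
          * (fact (\<mu> + \<nu>) / \<rho> ^ (\<mu> + \<nu>) * exp ((real m1 / \<Omega>1 / a + real m2 / \<Omega>2) / \<rho>)
             * upper_inc_Gamma (- real (\<mu> + \<nu>)) ((real m1 / \<Omega>1 / a + real m2 / \<Omega>2) / \<rho>)))"
    using assms by (intro expectation_ln_one_plus_min_erlang) (auto simp: card_gt_0_iff)
  also have "\<dots> = (\<Sum>\<mu><m1 * card A. \<Sum>\<nu><m2 * card B.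
            real m1 ^ \<mu> * real m2 ^ \<nu> / (\<Omega>1 ^ \<mu> * \<Omega>2 ^ \<nu> * a ^ \<mu> * fact \<mu> * fact \<nu>)
            * (Gamma (real (\<mu> + \<nu> + 1)) / \<rho> ^ (\<mu> + \<nu>))
            * exp ((real m1 / (\<Omega>1 * a) + real m2 / \<Omega>2) / \<rho>)
            * upper_inc_Gamma (- real (\<mu> + \<nu>)) ((real m1 / (\<Omega>1 * a) + real m2 / \<Omega>2) / \<rho>))"
    using Gamma_fact[of "\<mu> + \<nu>" for \<mu> \<nu>, where 'a=real]
    by (intro sum.cong refl) (simp add: power_divide field_simps)
  finally show ?thesis .
qed

theorem mainTheorem4:
  fixes M :: "'a measure"
    and Nr Nd msr msd mrd :: nat
    and \<Omega>sr \<Omega>sd \<Omega>rd \<rho> a2 :: real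
    and Gsr Gsd Grd :: "nat \<Rightarrow> 'a \<Rightarrow> real"
  assumes "prob_space M"
    and "Nr > 0" "Nd > 0" "msr > 0" "msd > 0" "mrd > 0"
    and "\<Omega>sr > 0" "\<Omega>sd > 0" "\<Omega>rd > 0" "\<rho> > 0" "0 < a2" "a2 < 1/2"
    and "\<And>i. i \<in> {1..Nr} \<Longrightarrow> distributed M lborel (Gsr i) (\<lambda>x. ennreal (gamma_pdf msr \<Omega>sr x))"
    and "\<And>j. j \<in> {1..Nd} \<Longrightarrow> distributed M lborel (Gsd j) (\<lambda>x. ennreal (gamma_pdf msd \<Omega>sd x))"
    and "\<And>k. k \<in> {1..Nd} \<Longrightarrow> distributed M lborel (Grd k) (\<lambda>x. ennreal (gamma_pdf mrd \<Omega>rd x))"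
    and "prob_space.indep_vars M (\<lambda>_. borel)
           (\<lambda>t. case t of Inl i \<Rightarrow> Gsr i | Inr (Inl j) \<Rightarrow> Gsd j | Inr (Inr k) \<Rightarrow> Grd k)
           (Inl ` {1..Nr} \<union> Inr ` Inl ` {1..Nd} \<union> Inr ` Inr ` {1..Nd})"
  shows
    "(let gsr = (\<lambda>\<omega>. \<Sum>i=1..Nr. Gsr i \<omega>);
          grd = (\<lambda>\<omega>. \<Sum>k=1..Nd. Grd k \<omega>);
          Y = (\<lambda>\<omega>. min (a2 * gsr \<omega>) (grd \<omega>));
          \<Xi> = real msr / (\<Omega>sr * a2) + real mrd / \<Omega>rd
      in (1/2) * (\<integral>\<omega>. log 2 (1 + \<rho> * Y \<omega>) \<partial>M) =
         1 / (2 * ln 2) *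
         (\<Sum>\<mu><msr * Nr. \<Sum>\<nu><mrd * Nd.
            real msr ^ \<mu> * real mrd ^ \<nu> /
              (\<Omega>sr ^ \<mu> * \<Omega>rd ^ \<nu> * a2 ^ \<mu> * fact \<mu> * fact \<nu>)
            * (Gamma (real (\<mu> + \<nu> + 1)) / \<rho> ^ (\<mu> + \<nu>))
            * exp (\<Xi> / \<rho>) * upper_inc_Gamma (- real (\<mu> + \<nu>)) (\<Xi> / \<rho>)))"
proof -
  interpret prob_space M by fact
  define G where "G = (\<lambda>t. case t of Inl i \<Rightarrow> Gsr i | Inr (Inl j) \<Rightarrow> Gsd j | Inr (Inr k) \<Rightarrow> Grd k)"
  define Isr where "Isr = (Inl ` {1..Nr} :: (nat + nat + nat) set)"
  define Ird where "Ird = (Inr ` Inr ` {1..Nd} :: (nat + nat + nat) set)"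
  define I where "I = Isr \<union> Inr ` Inl ` {1..Nd} \<union> Ird"
  have indep: "indep_vars (\<lambda>_. borel) G I"
    using assms(16) unfolding G_def I_def Isr_def Ird_def .
  have sets: "Isr \<subseteq> I" "Ird \<subseteq> I" "Isr \<inter> Ird = {}" "finite Isr" "finite Ird" "Isr \<noteq> {}" "Ird \<noteq> {}"
    using assms(2,3) by (auto simp: I_def Isr_def Ird_def)
  have dsr: "distributed M lborel (G i) (\<lambda>x. ennreal (gamma_pdf msr \<Omega>sr x))" if "i \<in> Isr" for i
    using that assms(13) by (auto simp: Isr_def G_def)
  have drd: "distributed M lborel (G k) (\<lambda>x. ennreal (gamma_pdf mrd \<Omega>rd x))" if "k \<in> Ird" for k
    using that assms(15) by (auto simp: Ird_def G_def)
  have sum_eq: "(\<Sum>i=1..Nr. Gsr i \<omega>) = (\<Sum>i\<in>Isr. G i \<omega>)" "(\<Sum>k=1..Nd. Grd k \<omega>) = (\<Sum>k\<in>Ird. G k \<omega>)" for \<omega>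
    by (simp_all add: G_def Isr_def Ird_def sum.reindex)
  have card: "card Isr = Nr" "card Ird = Nd"
    by (simp_all add: Isr_def Ird_def card_image)
  show ?thesis
    using expectation_ln_one_plus_min_gamma_sums[OF indep sets assms(4,7,6,9,11,10) dsr drd]
    unfolding Let_def log_def integral_divide_zero sum_eq card by simp
qed

end
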